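(* Let $\mathcal A$ (analysis units, $|\mathcal A|=n_a$) and $\mathcal R$ (randomization units, $|\mathcal R|=n_r$) be finite sets, let $\mathbf T=(T_r)_{r\in\mathcal R}$ be the random treatment vector, and let $E_{ar}:\{0,1\}^{n_r}\to\{0,1\}$, $e_{ar}=E_{ar}(\mathbf T)$, $w_{ar}$, $\alpha_a,\beta_a$, $x_a$, $y_a$, $\mu$, $\mathcal W_a(\mathbf 1)$, $z^u_a$, $\hat\beta^u_a$, $\widehat{\mathcal W_a(\mathbf 1)}^c$ be as in the context. Suppose $G\subset\mathcal A\times\mathcal R$ is a known anchor subgraph. Assume: (a) edges are $r$-driven; (b) the treatment assignments $T_r$, $r\in\mathcal R$, are independent Bernoulli random variables with success probability $p\in(0,1)$; (c) $\{(a,r)\mid u_{ar}\neq 0\}\subset G$; (d) $c_{ar}=\mathbb I((a,r)\in G)$ for all $(a,r)$; (e) $w_{ar}\neq 0$ for all $(a,r)\in G$; and (f) $|\{r\mid u_{ar}\neq 0\}|>0$ for all $a\in\mathcal A$. Then $$\hat\mu^{u,c}=\frac1{n_a}\sum_{a\in\mathcal A}\hat\beta^u_a\cdot\widehat{\mathcal W_a(\mathbf 1)}^c$$ is an unbiased estimator of the total treatment effect $\mu$, i.e.\ $\mathbb E[\hat\mu^{u,c}]=\mu$.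
   Context: Setting (endogenous bipartite interference graph). $\mathcal A$ is a set of $n_a$ analysis units, $\mathcal R$ a set of $n_r$ randomization units. A random treatment vector $\mathbf T=(T_r)_{r\in\mathcal R}\in\{0,1\}^{n_r}$ is assigned; all randomness comes from $\mathbf T$. For each $(a,r)\in\mathcal A\times\mathcal R$ there is an (unknown) edge potential outcome function $E_{ar}:\{0,1\}^{n_r}\to\{0,1\}$; its realization $e_{ar}=E_{ar}(\mathbf T)$ is observed. Edges are called $r$-driven if for every $(a,r)$, $E_{ar}(\mathbf T)$ depends on $\mathbf T$ only through $T_r$; then $e_{ar}(1)$ denotes the value of $E_{ar}$ when $T_r=1$ (so $e_{ar}(1)=E_{ar}(\mathbf 1)$). An anchor subgraph is a set $G\subset\mathcal A\times\mathcal R$ such that $E_{ar}(\mathbf T)=1$ for every $\mathbf T\in\{0,1\}^{n_r}$ and every $(a,r)\in G$. Outcome model: given known real weights $w_{ar}$, the potential outcome of analysis unit $a$ is $Y_a(\mathbf T)=\alpha_a+\beta_a x_a$ where $x_a=\sum_r T_r E_{ar}(\mathbf T)w_{ar}$ and $\alpha_a,\beta_a$ are unknown fixed constants; the realized outcome is $y_a=Y_a(\mathbf T)$. The total treatment effect (TTE) is $\mu=\frac1{n_a}\sum_a[Y_a(\mathbf 1)-Y_a(\mathbf 0)]=\frac1{n_a}\sum_a\mathcal W_a(\mathbf 1)\beta_a$, where $\mathcal W_a(\mathbf 1)=\sum_r w_{ar}E_{ar}(\mathbf 1)$ and $\mathbf 1,\mathbf 0$ are the all-treated and all-control vectors. Estimators: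 for fixed researcher-chosen real weights $u_{ar}$ and $c_{ar}$, let $z^u_a=\sum_r T_r u_{ar}$, $\hat\beta^u_a=y_a\,(z^u_a-\mathbb E z^u_a)/\mathrm{Cov}(x_a,z^u_a)$, and $\widehat{\mathcal W_a(\mathbf 1)}^c=\sum_r\left[\frac{T_r w_{ar}(e_{ar}-c_{ar})}{p}+w_{ar}c_{ar}\right]$, where $p$ is the treatment probability.
   Formalization: The covariance $\mathrm{Cov}(x_a,z^u_a)$ is also assumed to be nonzero for every analysis unit $a\in\mathcal A$. The statement above fails without it. *)

theory Defs
  imports "HOL-Probability.Probability"
begin

text \<open>Treatment vectors are functions 'r => bool (T r = True means T_r = 1).
  The design: independent Bernoulli(p) treatments on the randomization units R
  (coordinates outside R are fixed to False).\<close>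

definition treat_pmf :: "'r set \<Rightarrow> real \<Rightarrow> ('r \<Rightarrow> bool) pmf" where
  "treat_pmf R p = Pi_pmf R False (\<lambda>_. bernoulli_pmf p)"

definition Ex :: "'r set \<Rightarrow> real \<Rightarrow> (('r \<Rightarrow> bool) \<Rightarrow> real) \<Rightarrow> real" where
  "Ex R p f = measure_pmf.expectation (treat_pmf R p) f"

definition Cov :: "'r set \<Rightarrow> real \<Rightarrow> (('r \<Rightarrow> bool) \<Rightarrow> real) \<Rightarrow> (('r \<Rightarrow> bool) \<Rightarrow> real) \<Rightarrow> real" where
  "Cov R p f g = Ex R p (\<lambda>T. (f T - Ex R p f) * (g T - Ex R p g))"

definition r_driven :: "'a set \<Rightarrow> 'r set \<Rightarrow> ('a \<Rightarrow> 'r \<Rightarrow> ('r \<Rightarrow> bool) \<Rightarrow> bool) \<Rightarrow> bool" where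
  "r_driven A R E \<longleftrightarrow> (\<forall>a\<in>A. \<forall>r\<in>R. \<forall>T T'. T r = T' r \<longrightarrow> E a r T = E a r T')"

definition anchor_subgraph :: "'a set \<Rightarrow> 'r set \<Rightarrow> ('a \<Rightarrow> 'r \<Rightarrow> ('r \<Rightarrow> bool) \<Rightarrow> bool) \<Rightarrow> ('a \<times> 'r) set \<Rightarrow> bool" where
  "anchor_subgraph A R E G \<longleftrightarrow> G \<subseteq> A \<times> R \<and> (\<forall>(a, r)\<in>G. \<forall>T. E a r T)"

definition xa :: "'r set \<Rightarrow> ('a \<Rightarrow> 'r \<Rightarrow> ('r \<Rightarrow> bool) \<Rightarrow> bool) \<Rightarrow> ('a \<Rightarrow> 'r \<Rightarrow> real) \<Rightarrow> 'a \<Rightarrow> ('r \<Rightarrow> bool) \<Rightarrow> real" where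
  "xa R E w a T = (\<Sum>r\<in>R. of_bool (T r) * of_bool (E a r T) * w a r)"

definition Yout :: "'r set \<Rightarrow> ('a \<Rightarrow> 'r \<Rightarrow> ('r \<Rightarrow> bool) \<Rightarrow> bool) \<Rightarrow> ('a \<Rightarrow> 'r \<Rightarrow> real)
    \<Rightarrow> ('a \<Rightarrow> real) \<Rightarrow> ('a \<Rightarrow> real) \<Rightarrow> 'a \<Rightarrow> ('r \<Rightarrow> bool) \<Rightarrow> real" where
  "Yout R E w \<alpha> \<beta> a T = \<alpha> a + \<beta> a * xa R E w a T"

definition TTE :: "'a set \<Rightarrow> 'r set \<Rightarrow> ('a \<Rightarrow> 'r \<Rightarrow> ('r \<Rightarrow> bool) \<Rightarrow> bool) \<Rightarrow> ('a \<Rightarrow> 'r \<Rightarrow> real)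
    \<Rightarrow> ('a \<Rightarrow> real) \<Rightarrow> ('a \<Rightarrow> real) \<Rightarrow> real" where
  "TTE A R E w \<alpha> \<beta> = (1 / real (card A)) *
     (\<Sum>a\<in>A. Yout R E w \<alpha> \<beta> a (\<lambda>_. True) - Yout R E w \<alpha> \<beta> a (\<lambda>_. False))"

definition zu :: "'r set \<Rightarrow> ('a \<Rightarrow> 'r \<Rightarrow> real) \<Rightarrow> 'a \<Rightarrow> ('r \<Rightarrow> bool) \<Rightarrow> real" where
  "zu R u a T = (\<Sum>r\<in>R. of_bool (T r) * u a r)"

definition beta_hat :: "'r set \<Rightarrow> real \<Rightarrow> ('a \<Rightarrow> 'r \<Rightarrow> ('r \<Rightarrow> bool) \<Rightarrow> bool) \<Rightarrow> ('a \<Rightarrow> 'r \<Rightarrow> real)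
    \<Rightarrow> ('a \<Rightarrow> real) \<Rightarrow> ('a \<Rightarrow> real) \<Rightarrow> ('a \<Rightarrow> 'r \<Rightarrow> real) \<Rightarrow> 'a \<Rightarrow> ('r \<Rightarrow> bool) \<Rightarrow> real" where
  "beta_hat R p E w \<alpha> \<beta> u a T =
     Yout R E w \<alpha> \<beta> a T * (zu R u a T - Ex R p (zu R u a)) / Cov R p (xa R E w a) (zu R u a)"

definition W_hat :: "'r set \<Rightarrow> real \<Rightarrow> ('a \<Rightarrow> 'r \<Rightarrow> ('r \<Rightarrow> bool) \<Rightarrow> bool) \<Rightarrow> ('a \<Rightarrow> 'r \<Rightarrow> real)
    \<Rightarrow> ('a \<Rightarrow> 'r \<Rightarrow> real) \<Rightarrow> 'a \<Rightarrow> ('r \<Rightarrow> bool) \<Rightarrow> real" where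
  "W_hat R p E w c a T =
     (\<Sum>r\<in>R. of_bool (T r) * w a r * (of_bool (E a r T) - c a r) / p + w a r * c a r)"

definition mu_hat :: "'a set \<Rightarrow> 'r set \<Rightarrow> real \<Rightarrow> ('a \<Rightarrow> 'r \<Rightarrow> ('r \<Rightarrow> bool) \<Rightarrow> bool) \<Rightarrow> ('a \<Rightarrow> 'r \<Rightarrow> real)
    \<Rightarrow> ('a \<Rightarrow> real) \<Rightarrow> ('a \<Rightarrow> real) \<Rightarrow> ('a \<Rightarrow> 'r \<Rightarrow> real) \<Rightarrow> ('a \<Rightarrow> 'r \<Rightarrow> real)
    \<Rightarrow> ('r \<Rightarrow> bool) \<Rightarrow> real" where
  "mu_hat A R p E w \<alpha> \<beta> u c T = (1 / real (card A)) *
     (\<Sum>a\<in>A. beta_hat R p E w \<alpha> \<beta> u a T * W_hat R p E w c a T)"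

end

theory Submission
  imports Defs
begin

text \<open>
  Fix an analysis unit \<open>a\<close> and put \<open>v\<^sub>r = e\<^sub>a\<^sub>r(1) w\<^sub>a\<^sub>r\<close>; r-drivenness gives
  \<open>x\<^sub>a = \<Sum>\<^sub>r T\<^sub>r v\<^sub>r\<close>. For independent Bernoulli(p) coordinates, conditioning on \<open>T\<^sub>r\<close> yields
  \<open>E[(T\<^sub>r - p) h] = p(1 - p) E[\<Delta>\<^sub>r h]\<close> with \<open>\<Delta>\<^sub>r h = h(T\<^sub>r = 1) - h(T\<^sub>r = 0)\<close>, hence
  \<open>E[(z\<^sub>a - E z\<^sub>a) h] = p(1 - p) \<Sum>\<^sub>r u\<^sub>a\<^sub>r E[\<Delta>\<^sub>r h]\<close>. Taking \<open>h = x\<^sub>a\<close> gives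
  \<open>Cov(x\<^sub>a, z\<^sub>a) = p(1 - p) \<Sum>\<^sub>r u\<^sub>a\<^sub>r v\<^sub>r\<close>. On the anchor subgraph \<open>e = c = 1\<close>, so the estimator
  \<open>W_hat\<^sub>a\<close> does not depend on \<open>T\<^sub>r\<close> whenever \<open>u\<^sub>a\<^sub>r \<noteq> 0\<close>; for such \<open>r\<close>,
  \<open>\<Delta>\<^sub>r(y\<^sub>a W_hat\<^sub>a) = \<beta>\<^sub>a v\<^sub>r W_hat\<^sub>a\<close>. Since \<open>E W_hat\<^sub>a = W\<^sub>a(1)\<close>, taking \<open>h = y\<^sub>a W_hat\<^sub>a\<close>
  gives \<open>E[beta_hat\<^sub>a W_hat\<^sub>a] = \<beta>\<^sub>a W\<^sub>a(1)\<close>, and averaging over \<open>a\<close> gives the claim.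
\<close>

lemma finite_set_pmf_treat_pmf: "finite R \<Longrightarrow> finite (set_pmf (treat_pmf R p))"
  unfolding treat_pmf_def by (simp add: set_Pi_pmf finite_PiE_dflt)

lemma integrable_treat_pmf: "finite R \<Longrightarrow> integrable (treat_pmf R p) (f :: _ \<Rightarrow> real)"
  by (rule integrable_measure_pmf_finite[OF finite_set_pmf_treat_pmf])

lemma Ex_diff: "finite R \<Longrightarrow> Ex R p (\<lambda>T. f T - g T) = Ex R p f - Ex R p g"
  unfolding Ex_def by (intro Bochner_Integration.integral_diff integrable_treat_pmf)

lemma Ex_sum: "finite R \<Longrightarrow> Ex R p (\<lambda>T. \<Sum>i\<in>I. f i T) = (\<Sum>i\<in>I. Ex R p (f i))"
  unfolding Ex_def by (intro Bochner_Integration.integral_sum integrable_treat_pmf)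

lemma Ex_mult_left: "Ex R p (\<lambda>T. c * f T) = c * Ex R p f"
  unfolding Ex_def by simp

lemma Ex_mult_right: "Ex R p (\<lambda>T. f T * c) = Ex R p f * c"
  unfolding Ex_def by simp

lemma Ex_divide: "Ex R p (\<lambda>T. f T / c) = Ex R p f / c"
  unfolding Ex_def by (rule integral_divide_zero)

lemma Ex_const: "Ex R p (\<lambda>T. c) = c"
  unfolding Ex_def by simp

lemma Ex_fun_upd_split:
  assumes "finite R" "r \<in> R" "0 \<le> p" "p \<le> 1"
  shows "Ex R p h = p * Ex (R - {r}) p (\<lambda>T. h (T(r := True)))
                  + (1 - p) * Ex (R - {r}) p (\<lambda>T. h (T(r := False)))"
proof -
  let ?M = "treat_pmf (R - {r}) p" and ?B = "bernoulli_pmf p"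
  let ?S = "set_pmf ?M"
  have fin: "finite ?S" using assms(1) by (simp add: finite_set_pmf_treat_pmf)
  have decomp: "treat_pmf R p = map_pmf (\<lambda>(y, T). T(r := y)) (pair_pmf ?B ?M)"
    unfolding treat_pmf_def using assms(1,2) by (metis Pi_pmf_insert finite_Diff insert_Diff Diff_iff insertI1)
  have cond: "(\<Sum>T\<in>?S. h (T(r := y)) * pmf ?M T) = Ex (R - {r}) p (\<lambda>T. h (T(r := y)))" for y
    unfolding Ex_def using fin by (intro integral_measure_pmf_real[symmetric]) auto
  have "Ex R p h = (\<Sum>(y, T)\<in>UNIV \<times> ?S. h (T(r := y)) * pmf (pair_pmf ?B ?M) (y, T))"
    unfolding Ex_def decomp using fin
    by (auto simp: case_prod_unfold intro: integral_measure_pmf_real)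
  also have "\<dots> = (\<Sum>y\<in>UNIV. pmf ?B y * Ex (R - {r}) p (\<lambda>T. h (T(r := y))))"
    by (simp add: sum.cartesian_product[symmetric] sum_distrib_left pmf_pair mult_ac cond[symmetric])
  finally show ?thesis using assms(3,4) by (simp add: UNIV_bool)
qed

lemma Ex_of_bool_coord:
  assumes "finite R" "r \<in> R" "0 \<le> p" "p \<le> 1"
  shows "Ex R p (\<lambda>T. of_bool (T r)) = p"
  using Ex_fun_upd_split[OF assms, of "\<lambda>T. of_bool (T r)"] by (simp add: Ex_const)

lemma Ex_linear:
  assumes "finite R" "0 \<le> p" "p \<le> 1"
  shows "Ex R p (\<lambda>T. \<Sum>r\<in>R. of_bool (T r) * f r) = p * sum f R"
proof -
  have "Ex R p (\<lambda>T. \<Sum>r\<in>R. of_bool (T r) * f r) = (\<Sum>r\<in>R. Ex R p (\<lambda>T. of_bool (T r)) * f r)"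
    by (simp only: Ex_sum[OF assms(1)] Ex_mult_right)
  also have "\<dots> = (\<Sum>r\<in>R. p * f r)"
    using assms by (intro sum.cong) (simp_all add: Ex_of_bool_coord)
  finally show ?thesis by (simp add: sum_distrib_left)
qed

definition coord_diff :: "'r \<Rightarrow> (('r \<Rightarrow> bool) \<Rightarrow> real) \<Rightarrow> ('r \<Rightarrow> bool) \<Rightarrow> real" where
  "coord_diff r h T = h (T(r := True)) - h (T(r := False))"

lemma coord_diff_fun_upd [simp]: "coord_diff r h (T(r := b)) = coord_diff r h T"
  by (simp add: coord_diff_def)

lemma coord_diff_linear:
  assumes "finite R" "r \<in> R"
  shows "coord_diff r (\<lambda>T. \<Sum>s\<in>R. of_bool (T s) * f s) T = f r"
proof -
  have "(\<Sum>s\<in>R. of_bool ((T(r := b)) s) * f s) = of_bool b * f r + (\<Sum>s\<in>R - {r}. of_bool (T s) * f s)"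
    for b using assms by (simp add: sum.remove del: sum_of_bool_mult_eq)
  then show ?thesis by (simp add: coord_diff_def del: sum_of_bool_mult_eq)
qed

lemma coord_diff_mult_invariant:
  assumes "\<And>T b. g (T(r := b)) = g T"
  shows "coord_diff r (\<lambda>T. f T * g T) T = coord_diff r f T * g T"
  by (simp add: coord_diff_def assms left_diff_distrib)

lemma Ex_centered_coord_mult:
  assumes "finite R" "r \<in> R" "0 \<le> p" "p \<le> 1"
  shows "Ex R p (\<lambda>T. (of_bool (T r) - p) * h T) = p * (1 - p) * Ex R p (coord_diff r h)"
proof -
  have fin: "finite (R - {r})" using assms(1) by simp
  have "Ex R p (\<lambda>T. (of_bool (T r) - p) * h T)
      = p * Ex (R - {r}) p (\<lambda>T. (1 - p) * h (T(r := True)))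
        + (1 - p) * Ex (R - {r}) p (\<lambda>T. - p * h (T(r := False)))"
    using Ex_fun_upd_split[OF assms] by simp
  also have "\<dots> = p * (1 - p) * Ex (R - {r}) p (coord_diff r h)"
    unfolding coord_diff_def Ex_diff[OF fin] Ex_mult_left by (simp add: algebra_simps)
  also have "Ex (R - {r}) p (coord_diff r h) = Ex R p (coord_diff r h)"
    using Ex_fun_upd_split[OF assms, of "coord_diff r h"] by (simp add: algebra_simps)
  finally show ?thesis .
qed

lemma Ex_centered_zu_mult:
  assumes "finite R" "0 \<le> p" "p \<le> 1"
  shows "Ex R p (\<lambda>T. (zu R u a T - Ex R p (zu R u a)) * h T)
       = p * (1 - p) * (\<Sum>r\<in>R. u a r * Ex R p (coord_diff r h))"
proof -
  have "(zu R u a T - Ex R p (zu R u a)) * h T = (\<Sum>r\<in>R. u a r * ((of_bool (T r) - p) * h T))" for T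
    unfolding zu_def Ex_linear[OF assms]
    by (simp add: sum_distrib_left sum_distrib_right sum_subtractf[symmetric] algebra_simps
        del: sum_of_bool_mult_eq)
  then have "Ex R p (\<lambda>T. (zu R u a T - Ex R p (zu R u a)) * h T)
      = (\<Sum>r\<in>R. u a r * Ex R p (\<lambda>T. (of_bool (T r) - p) * h T))"
    by (simp only: Ex_sum[OF assms(1)] Ex_mult_left)
  also have "\<dots> = (\<Sum>r\<in>R. u a r * (p * (1 - p) * Ex R p (coord_diff r h)))"
    using assms by (intro sum.cong) (simp_all add: Ex_centered_coord_mult)
  finally show ?thesis by (simp add: sum_distrib_left mult_ac)
qed

lemma r_driven_treated:
  assumes "r_driven A R E" "a \<in> A" "r \<in> R" "T r"
  shows "E a r T = E a r (\<lambda>_. True)"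
  using assms unfolding r_driven_def by (metis (full_types))

lemma xa_r_driven:
  assumes "r_driven A R E" "a \<in> A"
  shows "xa R E w a = (\<lambda>T. \<Sum>r\<in>R. of_bool (T r) * (of_bool (E a r (\<lambda>_. True)) * w a r))"
  unfolding xa_def
proof (intro ext sum.cong refl)
  fix T r assume "r \<in> R"
  then show "of_bool (T r) * of_bool (E a r T) * w a r = of_bool (T r) * (of_bool (E a r (\<lambda>_. True)) * w a r)"
    using r_driven_treated[OF assms \<open>r \<in> R\<close>, of T] by (cases "T r") simp_all
qed

lemma coord_diff_Yout:
  assumes "r_driven A R E" "a \<in> A" "finite R" "r \<in> R"
  shows "coord_diff r (Yout R E w \<alpha> \<beta> a) T = \<beta> a * (of_bool (E a r (\<lambda>_. True)) * w a r)"
  using coord_diff_linear[OF assms(3,4)] unfolding Yout_def xa_r_driven[OF assms(1,2)]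
  by (simp add: coord_diff_def right_diff_distrib[symmetric] del: sum_of_bool_mult_eq)

lemma Cov_xa_zu:
  assumes "r_driven A R E" "a \<in> A" "finite R" "0 \<le> p" "p \<le> 1"
  shows "Cov R p (xa R E w a) (zu R u a)
       = p * (1 - p) * (\<Sum>r\<in>R. u a r * (of_bool (E a r (\<lambda>_. True)) * w a r))"
proof -
  have "coord_diff r (\<lambda>T. xa R E w a T - Ex R p (xa R E w a)) = (\<lambda>_. of_bool (E a r (\<lambda>_. True)) * w a r)"
    if "r \<in> R" for r
    using coord_diff_linear[OF assms(3) that] unfolding xa_r_driven[OF assms(1,2)]
    by (simp add: coord_diff_def fun_eq_iff del: sum_of_bool_mult_eq)
  then show ?thesis
    unfolding Cov_def using Ex_centered_zu_mult[OF assms(3-5), of u a "\<lambda>T. xa R E w a T - Ex R p (xa R E w a)"]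
    by (simp add: mult.commute Ex_const cong: sum.cong)
qed

lemma W_hat_anchor:
  assumes "anchor_subgraph A R E G" "r_driven A R E" "a \<in> A"
    and "\<forall>a\<in>A. \<forall>r\<in>R. c a r = (if (a, r) \<in> G then 1 else 0)"
  shows "W_hat R p E w c a = (\<lambda>T. \<Sum>r\<in>R.
           if (a, r) \<in> G then w a r else of_bool (T r) * (of_bool (E a r (\<lambda>_. True)) * w a r / p))"
  unfolding W_hat_def
proof (intro ext sum.cong refl)
  fix T r assume r: "r \<in> R"
  have "E a r T" if "(a, r) \<in> G" using assms(1) that unfolding anchor_subgraph_def by auto
  then show "of_bool (T r) * w a r * (of_bool (E a r T) - c a r) / p + w a r * c a r
      = (if (a, r) \<in> G then w a r else of_bool (T r) * (of_bool (E a r (\<lambda>_. True)) * w a r / p))"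
    using assms(4) r_driven_treated[OF assms(2,3) r, of T] \<open>a \<in> A\<close> r
    by (cases "(a, r) \<in> G"; cases "T r") simp_all
qed

lemma W_hat_anchor_fun_upd:
  assumes "anchor_subgraph A R E G" "r_driven A R E" "a \<in> A"
    and "\<forall>a\<in>A. \<forall>r\<in>R. c a r = (if (a, r) \<in> G then 1 else 0)" and "(a, r) \<in> G"
  shows "W_hat R p E w c a (T(r := b)) = W_hat R p E w c a T"
  unfolding W_hat_anchor[OF assms(1-4)]
proof (intro sum.cong refl)
  fix s
  show "(if (a, s) \<in> G then w a s else of_bool ((T(r := b)) s) * (of_bool (E a s (\<lambda>_. True)) * w a s / p))
      = (if (a, s) \<in> G then w a s else of_bool (T s) * (of_bool (E a s (\<lambda>_. True)) * w a s / p))"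
    using assms(5) by (cases "s = r") simp_all
qed

lemma Ex_W_hat_anchor:
  assumes "anchor_subgraph A R E G" "r_driven A R E" "a \<in> A"
    and "\<forall>a\<in>A. \<forall>r\<in>R. c a r = (if (a, r) \<in> G then 1 else 0)"
    and "finite R" "0 < p" "p \<le> 1"
  shows "Ex R p (W_hat R p E w c a) = (\<Sum>r\<in>R. of_bool (E a r (\<lambda>_. True)) * w a r)"
  unfolding W_hat_anchor[OF assms(1-4)] Ex_sum[OF assms(5)]
proof (intro sum.cong refl)
  fix r assume r: "r \<in> R"
  have "E a r (\<lambda>_. True)" if "(a, r) \<in> G" using assms(1) that unfolding anchor_subgraph_def by auto
  then show "Ex R p (\<lambda>T. if (a, r) \<in> G then w a r else of_bool (T r) * (of_bool (E a r (\<lambda>_. True)) * w a r / p))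
      = of_bool (E a r (\<lambda>_. True)) * w a r"
    using assms(5-7) r by (cases "(a, r) \<in> G") (simp_all add: Ex_const Ex_divide Ex_mult_right Ex_of_bool_coord)
qed

lemma Ex_beta_hat_W_hat:
  assumes anchor: "anchor_subgraph A R E G" and rdriven: "r_driven A R E" and a: "a \<in> A"
    and c_def: "\<forall>a\<in>A. \<forall>r\<in>R. c a r = (if (a, r) \<in> G then 1 else 0)"
    and u_supp: "\<forall>a\<in>A. \<forall>r\<in>R. u a r \<noteq> 0 \<longrightarrow> (a, r) \<in> G"
    and R: "finite R" and p: "0 < p" "p \<le> 1"
    and cov_nz: "Cov R p (xa R E w a) (zu R u a) \<noteq> 0"
  shows "Ex R p (\<lambda>T. beta_hat R p E w \<alpha> \<beta> u a T * W_hat R p E w c a T)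
       = \<beta> a * (\<Sum>r\<in>R. of_bool (E a r (\<lambda>_. True)) * w a r)"
proof -
  define v where "v r = of_bool (E a r (\<lambda>_. True)) * w a r" for r
  define C where "C = Cov R p (xa R E w a) (zu R u a)"
  let ?W = "W_hat R p E w c a" and ?Y = "Yout R E w \<alpha> \<beta> a"
  have C: "C = p * (1 - p) * (\<Sum>r\<in>R. u a r * v r)"
    unfolding C_def v_def using Cov_xa_zu[OF rdriven a R] p by simp
  have diff: "u a r * Ex R p (coord_diff r (\<lambda>T. ?Y T * ?W T)) = u a r * (\<beta> a * v r * sum v R)"
    if r: "r \<in> R" for r
  proof (cases "u a r = 0")
    case False
    then have "(a, r) \<in> G" using u_supp a r by blast
    then have "?W (T(r := b)) = ?W T" for T b
      using W_hat_anchor_fun_upd[OF anchor rdriven a c_def] by blast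
    then have "coord_diff r (\<lambda>T. ?Y T * ?W T) = (\<lambda>T. \<beta> a * v r * ?W T)"
      using coord_diff_mult_invariant[where g = ?W] coord_diff_Yout[OF rdriven a R r]
      unfolding v_def by (simp add: fun_eq_iff)
    then show ?thesis
      using Ex_W_hat_anchor[OF anchor rdriven a c_def R p] unfolding v_def by (simp add: Ex_mult_left)
  qed simp
  have "Ex R p (\<lambda>T. beta_hat R p E w \<alpha> \<beta> u a T * ?W T)
      = Ex R p (\<lambda>T. (zu R u a T - Ex R p (zu R u a)) * (?Y T * ?W T)) / C"
    unfolding beta_hat_def C_def Ex_divide[symmetric] by (simp add: mult_ac)
  also have "\<dots> = p * (1 - p) * (\<Sum>r\<in>R. u a r * (\<beta> a * v r * sum v R)) / C"
    using Ex_centered_zu_mult[OF R, of p u a "\<lambda>T. ?Y T * ?W T"] p diff by (simp cong: sum.cong)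
  also have "\<dots> = \<beta> a * sum v R * C / C"
    unfolding C by (simp add: sum_distrib_left mult_ac)
  also have "\<dots> = \<beta> a * sum v R"
    using cov_nz unfolding C_def by simp
  finally show ?thesis unfolding v_def .
qed

theorem theorem1:
  fixes A :: "'a set" and R :: "'r set" and p :: real
    and E :: "'a \<Rightarrow> 'r \<Rightarrow> ('r \<Rightarrow> bool) \<Rightarrow> bool"
    and w u c :: "'a \<Rightarrow> 'r \<Rightarrow> real" and \<alpha> \<beta> :: "'a \<Rightarrow> real"
    and G :: "('a \<times> 'r) set"
  assumes finA: "finite A" and finR: "finite R"
    and anchor: "anchor_subgraph A R E G"
    and rdriven: "r_driven A R E"
    and p: "0 < p" "p < 1"
    and u_supp: "\<forall>a\<in>A. \<forall>r\<in>R. u a r \<noteq> 0 \<longrightarrow> (a, r) \<in> G"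
    and c_def: "\<forall>a\<in>A. \<forall>r\<in>R. c a r = (if (a, r) \<in> G then 1 else 0)"
    and w_nz: "\<forall>(a, r)\<in>G. w a r \<noteq> 0"
    and u_nonempty: "\<forall>a\<in>A. card {r\<in>R. u a r \<noteq> 0} > 0"
    and cov_nz: "\<forall>a\<in>A. Cov R p (xa R E w a) (zu R u a) \<noteq> 0"
  shows "Ex R p (mu_hat A R p E w \<alpha> \<beta> u c) = TTE A R E w \<alpha> \<beta>"
proof -
  have "Ex R p (mu_hat A R p E w \<alpha> \<beta> u c)
      = 1 / real (card A) * (\<Sum>a\<in>A. Ex R p (\<lambda>T. beta_hat R p E w \<alpha> \<beta> u a T * W_hat R p E w c a T))"
    unfolding mu_hat_def by (simp only: Ex_mult_left Ex_sum[OF finR])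
  also have "\<dots> = 1 / real (card A) * (\<Sum>a\<in>A. \<beta> a * (\<Sum>r\<in>R. of_bool (E a r (\<lambda>_. True)) * w a r))"
    using Ex_beta_hat_W_hat[OF anchor rdriven _ c_def u_supp finR] p cov_nz by simp
  also have "\<dots> = TTE A R E w \<alpha> \<beta>"
    unfolding TTE_def Yout_def xa_def by (simp add: mult.commute)
  finally show ?thesis .
qed

end
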